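(* Let $n>8$ and let $M_n$ be the maximum of $av_1(T)$ over all trees $T$ with $n$ vertices. Then $M_n=\frac n2+\delta_n$ with $0<\delta_n<\frac12$. Moreover, $\lim_{n\to\infty}\big(M_n-\frac{n+1}{2}\big)=0$, as witnessed by the trees $R_n$ obtained from the star $S_{n-1}$ by attaching a new vertex to one of its leaves, which satisfy $\frac n2<av_1(R_n)<\frac{n+1}2$ and $av_1(R_n)-\frac{n+1}{2}\to 0$.
   Context: For a graph $G=(V,E)$, a set $S\subseteq V$ is a $1$-nearly independent vertex set if the subgraph induced by $S$ has exactly one edge. $\sigma_1(G)$ is the number of such sets, $S_1(G)$ the sum of their sizes, and $av_1(G)=S_1(G)/\sigma_1(G)$. $S_m$ denotes the star on $m$ vertices. *)

theory Defs
  imports Complex_Main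
begin

definition simple_graph :: "'a set \<Rightarrow> 'a set set \<Rightarrow> bool" where
  "simple_graph V E \<longleftrightarrow> finite V \<and> (\<forall>e\<in>E. e \<subseteq> V \<and> card e = 2)"

definition adj :: "'a set set \<Rightarrow> 'a \<Rightarrow> 'a \<Rightarrow> bool" where
  "adj E u v \<longleftrightarrow> {u, v} \<in> E"

definition graph_connected :: "'a set \<Rightarrow> 'a set set \<Rightarrow> bool" where
  "graph_connected V E \<longleftrightarrow> (\<forall>u\<in>V. \<forall>v\<in>V. (adj E)\<^sup>*\<^sup>* u v)"

definition is_tree :: "'a set \<Rightarrow> 'a set set \<Rightarrow> bool" where
  "is_tree V E \<longleftrightarrow> simple_graph V E \<and> V \<noteq> {} \<and> graph_connected V E \<and> card E = card V - 1"

definition induced_edges :: "'a set set \<Rightarrow> 'a set \<Rightarrow> 'a set set" where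
  "induced_edges E S = {e \<in> E. e \<subseteq> S}"

definition nis1 :: "'a set \<Rightarrow> 'a set set \<Rightarrow> 'a set set" where
  "nis1 V E = {S. S \<subseteq> V \<and> card (induced_edges E S) = 1}"

definition sigma1 :: "'a set \<Rightarrow> 'a set set \<Rightarrow> nat" where
  "sigma1 V E = card (nis1 V E)"

definition S1 :: "'a set \<Rightarrow> 'a set set \<Rightarrow> nat" where
  "S1 V E = (\<Sum>S\<in>nis1 V E. card S)"

definition av1 :: "'a set \<Rightarrow> 'a set set \<Rightarrow> real" where
  "av1 V E = real (S1 V E) / real (sigma1 V E)"

text \<open>M n: maximum of av1 over all trees on n vertices (vertex set {0..<n}; av1 is
  invariant under isomorphism, so this is the maximum over all n-vertex trees).\<close>
definition M :: "nat \<Rightarrow> real" where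
  "M n = Max (av1 {0..<n} ` {E. is_tree {0..<n} E})"

definition R_edges :: "nat \<Rightarrow> nat set set" where
  "R_edges n = {{0, i} | i. 1 \<le> i \<and> i \<le> n - 2} \<union> {{1, n - 1}}"

end

theory Submission
  imports Defs
begin

(* Let G be a connected graph on n >= 4 vertices and count the pairs (S, w) such that S and
   S - {w} are both 1-nearly independent, once from the larger and once from the smaller set.
   Every vertex of S off its unique induced edge may be removed, so S has at least |S| - 2
   removable vertices. Some edge leaves S, and its outer end cannot be added, so at most
   n - |S| - 1 vertices are addable; for one suitable S (found on a path with three vertices)
   two outside vertices are blocked. Summing over S gives 2 S_1 < (n + 1) sigma_1, hence
   av_1 < (n + 1)/2 for every tree and M_n < (n + 1)/2.

   The 1-nearly independent sets of R_n can be listed explicitly. With m = n - 3 this gives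
   sigma_1 = 2m + 1 + 2^m and 2 S_1 = 10m + 4 + (m + 4) 2^m, so that
   av_1(R_n) - (n + 1)/2 = (m - 2m^2) / (2 (2m + 1 + 2^m)), which lies in (-1/2, 0)
   for m >= 6 and tends to 0. *)

section \<open>An upper bound for connected graphs\<close>

lemma induced_edges_eq_singleton_iff:
  "induced_edges E S = {e} \<longleftrightarrow> e \<in> E \<and> e \<subseteq> S \<and> (\<forall>e'\<in>E. e' \<subseteq> S \<longrightarrow> e' = e)"
  unfolding induced_edges_def
proof
  assume h: "{e \<in> E. e \<subseteq> S} = {e}"
  then have "e \<in> {e \<in> E. e \<subseteq> S}" by simp
  moreover have "e' = e" if "e' \<in> E" "e' \<subseteq> S" for e'
  proof -
    have "e' \<in> {e \<in> E. e \<subseteq> S}" using that by simp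
    then show ?thesis by (simp add: h)
  qed
  ultimately show "e \<in> E \<and> e \<subseteq> S \<and> (\<forall>e'\<in>E. e' \<subseteq> S \<longrightarrow> e' = e)" by simp
next
  assume "e \<in> E \<and> e \<subseteq> S \<and> (\<forall>e'\<in>E. e' \<subseteq> S \<longrightarrow> e' = e)"
  then show "{e \<in> E. e \<subseteq> S} = {e}" by auto
qed

lemma nis1_iff:
  "S \<in> nis1 V E \<longleftrightarrow> S \<subseteq> V \<and> (\<exists>e\<in>E. e \<subseteq> S \<and> (\<forall>e'\<in>E. e' \<subseteq> S \<longrightarrow> e' = e))"
  unfolding nis1_def mem_Collect_eq One_nat_def card_1_singleton_iff
    induced_edges_eq_singleton_iff by blast

lemma nis1E:
  assumes "S \<in> nis1 V E"
  obtains e where "S \<subseteq> V" "e \<in> E" "e \<subseteq> S" "\<And>e'. e' \<in> E \<Longrightarrow> e' \<subseteq> S \<Longrightarrow> e' = e"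
  using assms that unfolding nis1_iff by metis

lemma nis1I:
  assumes "S \<subseteq> V" "e \<in> E" "e \<subseteq> S" "\<And>e'. e' \<in> E \<Longrightarrow> e' \<subseteq> S \<Longrightarrow> e' = e"
  shows "S \<in> nis1 V E"
  using assms unfolding nis1_iff by metis

lemma simple_graph_finite_nis1: "simple_graph V E \<Longrightarrow> finite (nis1 V E)"
  unfolding simple_graph_def nis1_def by (auto intro: finite_subset[of _ "Pow V"])

lemma edge_in_nis1:
  assumes "simple_graph V E" "e \<in> E"
  shows "e \<in> nis1 V E"
proof (rule nis1I[OF _ assms(2) order.refl])
  show "e \<subseteq> V" using assms unfolding simple_graph_def by blast
  fix e' assume "e' \<in> E" "e' \<subseteq> e"
  moreover have "card e' = card e" "finite e" using assms \<open>e' \<in> E\<close> unfolding simple_graph_def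
    by (auto intro: card_ge_0_finite)
  ultimately show "e' = e" by (simp add: card_subset_eq)
qed

lemma nis1_remove_vertex:
  assumes "S \<in> nis1 V E" "e \<in> E" "e \<subseteq> S" "w \<notin> e"
  shows "S - {w} \<in> nis1 V E"
proof -
  obtain e0 where "S \<subseteq> V" "e0 \<in> E" "e0 \<subseteq> S"
    and unique: "\<And>e'. e' \<in> E \<Longrightarrow> e' \<subseteq> S \<Longrightarrow> e' = e0"
    using nis1E[OF assms(1)] by metis
  have "e' = e" if "e' \<in> E" "e' \<subseteq> S - {w}" for e'
    using unique[of e] unique[of e'] assms(2,3) that by blast
  then show ?thesis using \<open>S \<subseteq> V\<close> assms(2-4) by (intro nis1I[of _ _ e]) auto
qed

lemma nis1_insert_neighbour:
  assumes "S \<in> nis1 V E" "x \<in> S" "w \<notin> S" "{x, w} \<in> E"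
  shows "insert w S \<notin> nis1 V E"
proof
  obtain e where "e \<in> E" "e \<subseteq> S" using nis1E[OF assms(1)] by metis
  assume "insert w S \<in> nis1 V E"
  then obtain e0 where "e0 \<in> E" "e0 \<subseteq> insert w S"
    and unique: "\<And>e'. e' \<in> E \<Longrightarrow> e' \<subseteq> insert w S \<Longrightarrow> e' = e0"
    using nis1E by metis
  have "e = e0" using unique \<open>e \<in> E\<close> \<open>e \<subseteq> S\<close> by blast
  moreover have "{x, w} = e0" using unique assms(2,4) by blast
  ultimately show False using \<open>e \<subseteq> S\<close> assms(3) by blast
qed

lemma connected_crossing_edge:
  assumes "simple_graph V E" "graph_connected V E" "S \<subseteq> V" "x \<in> S" "y \<in> V - S"
  shows "\<exists>a\<in>S. \<exists>w\<in>V - S. {a, w} \<in> E"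
proof -
  have "(adj E)\<^sup>*\<^sup>* x y" using assms unfolding graph_connected_def by blast
  then show ?thesis using \<open>y \<in> V - S\<close>
  proof (induction rule: rtranclp_induct)
    case base then show ?case using assms by simp
  next
    case (step y z)
    have "y \<in> V" using step.hyps(2) assms(1) unfolding adj_def simple_graph_def by auto
    show ?case
    proof (cases "y \<in> S")
      case True
      then show ?thesis using step.hyps(2) step.prems unfolding adj_def by blast
    next
      case False
      then show ?thesis using step.IH \<open>y \<in> V\<close> by blast
    qed
  qed
qed

lemma nis1_exists_blocked_vertex:
  assumes "simple_graph V E" "graph_connected V E" "3 \<le> card V" "S \<in> nis1 V E"
  shows "\<exists>w\<in>V - S. insert w S \<notin> nis1 V E"
proof -
  obtain e where "S \<subseteq> V" "e \<in> E" "e \<subseteq> S"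
    and unique: "\<And>e'. e' \<in> E \<Longrightarrow> e' \<subseteq> S \<Longrightarrow> e' = e"
    using nis1E[OF assms(4)] by metis
  have "e \<subseteq> V" "card e = 2" using assms(1) \<open>e \<in> E\<close> unfolding simple_graph_def by auto
  then obtain x where "x \<in> e" by fastforce
  have "finite e" using \<open>card e = 2\<close> by (simp add: card_ge_0_finite)
  have "\<not> V \<subseteq> e" using card_mono[OF \<open>finite e\<close>, of V] \<open>card e = 2\<close> assms(3) by auto
  then obtain y where "y \<in> V - e" by blast
  then obtain a w where "a \<in> e" "w \<in> V - e" "{a, w} \<in> E"
    using connected_crossing_edge[OF assms(1,2) \<open>e \<subseteq> V\<close> \<open>x \<in> e\<close>] by blast
  have "w \<notin> S"
  proof
    assume "w \<in> S"
    then have "{a, w} = e" using unique[OF \<open>{a, w} \<in> E\<close>] \<open>a \<in> e\<close> \<open>e \<subseteq> S\<close> by blast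
    then show False using \<open>w \<in> V - e\<close> by blast
  qed
  then show ?thesis
    using nis1_insert_neighbour[OF assms(4) _ _ \<open>{a, w} \<in> E\<close>] \<open>a \<in> e\<close> \<open>e \<subseteq> S\<close> \<open>w \<in> V - e\<close>
    by blast
qed

lemma connected_exists_path3:
  assumes "simple_graph V E" "graph_connected V E" "3 \<le> card V"
  obtains c d w where "{c, d} \<in> E" "{c, w} \<in> E" "w \<in> V - {c, d}"
proof -
  obtain v where "v \<in> V" using assms(3) by fastforce
  have "\<not> V \<subseteq> {v}" using card_mono[of "{v}" V] assms(3) by auto
  then obtain a b where "a \<in> {v}" "b \<in> V - {v}" "{a, b} \<in> E"
    using connected_crossing_edge[OF assms(1,2), of "{v}" v] \<open>v \<in> V\<close> by blast
  then have vb: "{v, b} \<in> E" "b \<in> V" "b \<noteq> v" by auto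
  have "\<not> V \<subseteq> {v, b}" using card_mono[of "{v, b}" V] vb(3) assms(3) by auto
  then obtain x w where x: "x \<in> {v, b}" and w: "w \<in> V - {v, b}" and xw: "{x, w} \<in> E"
    using connected_crossing_edge[OF assms(1,2), of "{v, b}" v] \<open>v \<in> V\<close> vb(2) by blast
  define d where "d = (if x = v then b else v)"
  have "{x, d} = {v, b}" using x by (auto simp: d_def)
  then show thesis using that[of x d w] vb(1) w xw by simp
qed

lemma exists_nis1_two_blocked_vertices:
  assumes "simple_graph V E" "graph_connected V E" "4 \<le> card V"
  obtains S u v where "S \<in> nis1 V E" "u \<in> V - S" "v \<in> V - S" "u \<noteq> v"
    "insert u S \<notin> nis1 V E" "insert v S \<notin> nis1 V E"
proof -
  obtain c d w where cd: "{c, d} \<in> E" and cw: "{c, w} \<in> E" and w: "w \<in> V - {c, d}"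
    using connected_exists_path3[OF assms(1,2)] assms(3) by auto
  have "c \<in> V" "d \<in> V" "card {c, d} = 2" using assms(1) cd unfolding simple_graph_def by auto
  then have "c \<noteq> d" by auto
  have cd_nis1: "{c, d} \<in> nis1 V E" and cw_nis1: "{c, w} \<in> nis1 V E"
    using edge_in_nis1[OF assms(1)] cd cw by auto
  \<comment> \<open>Either the edge {c, d} has two outside neighbours, or w is its only one; then w has a
      neighbour y outside {c, d, w}, and S = {c, w} blocks both d and y.\<close>
  show thesis
  proof (cases "\<exists>w'\<in>V - {c, d}. w' \<noteq> w \<and> ({c, w'} \<in> E \<or> {d, w'} \<in> E)")
    case True
    then obtain w' where w': "w' \<in> V - {c, d}" "w' \<noteq> w" "{c, w'} \<in> E \<or> {d, w'} \<in> E" by blast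
    then have "insert w' {c, d} \<notin> nis1 V E"
      using nis1_insert_neighbour[OF cd_nis1, of c w'] nis1_insert_neighbour[OF cd_nis1, of d w'] by blast
    moreover have "insert w {c, d} \<notin> nis1 V E"
      using nis1_insert_neighbour[OF cd_nis1, of c w] cw w by blast
    ultimately show thesis using that[OF cd_nis1] w w' by blast
  next
    case False
    have "card {c, d, w} \<le> 3" by (simp add: card_insert_le_m1)
    then have "\<not> V \<subseteq> {c, d, w}" using card_mono[of "{c, d, w}" V] assms(3) by auto
    then obtain x y where x: "x \<in> {c, d, w}" and y: "y \<in> V - {c, d, w}" and xy: "{x, y} \<in> E"
      using connected_crossing_edge[OF assms(1,2), of "{c, d, w}" c] \<open>c \<in> V\<close> \<open>d \<in> V\<close> w by blast
    have "x = w"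
    proof (rule ccontr)
      assume "x \<noteq> w"
      then have "{c, y} \<in> E \<or> {d, y} \<in> E" using x xy by blast
      then show False using False y by blast
    qed
    have "insert d {c, w} \<notin> nis1 V E"
      using nis1_insert_neighbour[OF cw_nis1, of c d] cd w \<open>c \<noteq> d\<close> by blast
    moreover have "insert y {c, w} \<notin> nis1 V E"
      using nis1_insert_neighbour[OF cw_nis1, of w y] xy \<open>x = w\<close> y by blast
    ultimately show thesis using that[OF cw_nis1, of d y] \<open>c \<noteq> d\<close> \<open>d \<in> V\<close> w y by blast
  qed
qed

definition removable :: "'a set set \<Rightarrow> 'a set \<Rightarrow> 'a set" where
  "removable N S = {w \<in> S. S - {w} \<in> N}"

definition addable :: "'a set \<Rightarrow> 'a set set \<Rightarrow> 'a set \<Rightarrow> 'a set" where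
  "addable V N S = {w \<in> V - S. insert w S \<in> N}"

lemma bij_betw_remove_vertex:
  assumes "\<And>S. S \<in> N \<Longrightarrow> S \<subseteq> V"
  shows "bij_betw (\<lambda>(S, w). (S - {w}, w)) (Sigma N (removable N)) (Sigma N (addable V N))"
proof (rule bij_betw_byWitness[where f' = "\<lambda>(S, w). (insert w S, w)"])
  show "\<forall>a\<in>Sigma N (removable N). (\<lambda>(S, w). (insert w S, w)) ((\<lambda>(S, w). (S - {w}, w)) a) = a"
    unfolding removable_def by auto
  show "\<forall>a\<in>Sigma N (addable V N). (\<lambda>(S, w). (S - {w}, w)) ((\<lambda>(S, w). (insert w S, w)) a) = a"
    unfolding addable_def by auto
  show "(\<lambda>(S, w). (S - {w}, w)) ` Sigma N (removable N) \<subseteq> Sigma N (addable V N)"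
    using assms unfolding removable_def addable_def
    by (auto simp: insert_absorb)
  show "(\<lambda>(S, w). (insert w S, w)) ` Sigma N (addable V N) \<subseteq> Sigma N (removable N)"
    unfolding removable_def addable_def by auto
qed

lemma sum_card_removable_eq_sum_card_addable:
  assumes "finite V" "N \<subseteq> Pow V"
  shows "(\<Sum>S\<in>N. card (removable N S)) = (\<Sum>S\<in>N. card (addable V N S))"
proof -
  have "finite N" using finite_subset[OF assms(2)] assms(1) by simp
  have sub: "S \<subseteq> V" if "S \<in> N" for S using subsetD[OF assms(2) that] by simp
  have fin: "finite (removable N S)" "finite (addable V N S)" if "S \<in> N" for S
    using finite_subset[OF sub[OF that] assms(1)] assms(1) unfolding removable_def addable_def by auto
  have "card (Sigma N (removable N)) = card (Sigma N (addable V N))"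
    using bij_betw_remove_vertex[OF sub] by (rule bij_betw_same_card)
  then show ?thesis using \<open>finite N\<close> fin by (simp add: card_SigmaI)
qed

lemma card_removable_nis1:
  assumes "simple_graph V E" "S \<in> nis1 V E"
  shows "card S \<le> card (removable (nis1 V E) S) + 2"
proof -
  obtain e where "S \<subseteq> V" "e \<in> E" "e \<subseteq> S" using nis1E[OF assms(2)] by metis
  have "card e = 2" "finite S"
    using assms(1) \<open>e \<in> E\<close> \<open>S \<subseteq> V\<close> finite_subset unfolding simple_graph_def by auto
  have "S - e \<subseteq> removable (nis1 V E) S"
    using nis1_remove_vertex[OF assms(2) \<open>e \<in> E\<close> \<open>e \<subseteq> S\<close>] unfolding removable_def by blast
  then have "card (S - e) \<le> card (removable (nis1 V E) S)"
    using \<open>finite S\<close> by (intro card_mono) (auto simp: removable_def)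
  moreover have "card S = card (S - e) + card e"
    using card_Diff_subset[OF finite_subset[OF \<open>e \<subseteq> S\<close> \<open>finite S\<close>] \<open>e \<subseteq> S\<close>]
      card_mono[OF \<open>finite S\<close> \<open>e \<subseteq> S\<close>] by linarith
  ultimately show ?thesis using \<open>card e = 2\<close> by linarith
qed

lemma card_addable_le:
  assumes "finite V" "S \<subseteq> V" "B \<subseteq> V - S" "\<forall>w\<in>B. insert w S \<notin> N"
  shows "card (addable V N S) + card S + card B \<le> card V"
proof -
  have disjoint: "addable V N S \<inter> S = {}" "(addable V N S \<union> S) \<inter> B = {}"
    using assms(3,4) unfolding addable_def by blast+
  have "addable V N S \<union> S \<union> B \<subseteq> V" using assms(2,3) unfolding addable_def by blast
  moreover from this have "finite (addable V N S)" "finite S" "finite B"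
    using assms(1) finite_subset by blast+
  ultimately show ?thesis using disjoint card_mono[OF assms(1)] by (metis card_Un_disjoint finite_UnI)
qed

theorem S1_less_connected:
  assumes "simple_graph V E" "graph_connected V E" "4 \<le> card V"
  shows "2 * S1 V E < (card V + 1) * sigma1 V E"
proof -
  define N where "N = nis1 V E"
  have "finite V" using assms(1) by (simp add: simple_graph_def)
  have "N \<subseteq> Pow V" unfolding N_def nis1_def by blast
  have "finite N" unfolding N_def using simple_graph_finite_nis1[OF assms(1)] .
  have removable: "card S \<le> card (removable N S) + 2" if "S \<in> N" for S
    using card_removable_nis1[OF assms(1)] that unfolding N_def by blast
  have addable: "card (addable V N S) + card S + 1 \<le> card V" if S: "S \<in> N" for S
  proof -
    obtain w where "w \<in> V - S" "insert w S \<notin> N"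
      using nis1_exists_blocked_vertex[OF assms(1,2) _ S[unfolded N_def]] assms(3) unfolding N_def by auto
    then show ?thesis
      using card_addable_le[OF \<open>finite V\<close>, of S "{w}" N] S \<open>N \<subseteq> Pow V\<close> by auto
  qed
  obtain S0 u v where "S0 \<in> N" "u \<in> V - S0" "v \<in> V - S0" "u \<noteq> v" "insert u S0 \<notin> N" "insert v S0 \<notin> N"
    using exists_nis1_two_blocked_vertices[OF assms] unfolding N_def by metis
  then have addable_S0: "card (addable V N S0) + card S0 + 1 < card V"
    using card_addable_le[OF \<open>finite V\<close>, of S0 "{u, v}" N] \<open>N \<subseteq> Pow V\<close> by auto
  have "S1 V E \<le> (\<Sum>S\<in>N. card (removable N S) + 2)"
    unfolding S1_def N_def[symmetric] by (rule sum_mono) (rule removable)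
  then have removed: "S1 V E \<le> (\<Sum>S\<in>N. card (removable N S)) + 2 * card N"
    unfolding sum.distrib by simp
  have "(\<Sum>S\<in>N. card (addable V N S) + card S + 1) < (\<Sum>S\<in>N. card V)"
    using addable addable_S0 \<open>S0 \<in> N\<close> by (intro sum_strict_mono_ex1[OF \<open>finite N\<close>]) auto
  then have added: "(\<Sum>S\<in>N. card (addable V N S)) + S1 V E + card N < card V * card N"
    unfolding sum.distrib S1_def N_def[symmetric] by (simp add: mult.commute)
  show ?thesis
    using removed added sum_card_removable_eq_sum_card_addable[OF \<open>finite V\<close> \<open>N \<subseteq> Pow V\<close>]
    unfolding sigma1_def N_def[symmetric] by (simp add: algebra_simps)
qed

corollary av1_less_connected:
  assumes "simple_graph V E" "graph_connected V E" "4 \<le> card V"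
  shows "av1 V E < (real (card V) + 1) / 2"
proof -
  obtain S where "S \<in> nis1 V E"
    using exists_nis1_two_blocked_vertices[OF assms] by metis
  then have "sigma1 V E > 0"
    unfolding sigma1_def using simple_graph_finite_nis1[OF assms(1)] card_gt_0_iff by blast
  moreover have "real (2 * S1 V E) < real ((card V + 1) * sigma1 V E)"
    using S1_less_connected[OF assms] by (simp only: of_nat_less_iff)
  ultimately show ?thesis unfolding av1_def by (simp add: divide_less_eq algebra_simps)
qed

section \<open>The trees R_n\<close>

lemma graph_connected_if_root:
  assumes "\<And>v. v \<in> V \<Longrightarrow> (adj E)\<^sup>*\<^sup>* r v"
  shows "graph_connected V E"
proof -
  have "symp (adj E)" unfolding adj_def by (simp add: symp_def insert_commute)
  then have "symp (adj E)\<^sup>*\<^sup>*" by (rule symp_rtranclp)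
  then show ?thesis
    unfolding graph_connected_def using assms by (meson rtranclp_trans sympD)
qed

lemma R_edges_eq: "R_edges n = insert {1, n - 1} ((\<lambda>i. {0, i}) ` {1..n - 2})"
  unfolding R_edges_def by auto

lemma R_edgesE:
  assumes "e \<in> R_edges n"
  obtains "e = {1, n - 1}" | i where "i \<in> {1..n - 2}" "e = {0, i}"
  using assms unfolding R_edges_eq by blast

lemma is_tree_R_edges:
  assumes "4 \<le> n"
  shows "is_tree {0..<n} (R_edges n)"
proof -
  have "e \<subseteq> {0..<n} \<and> card e = 2" if "e \<in> R_edges n" for e
    using that by (cases rule: R_edgesE) (use assms in auto)
  then have "simple_graph {0..<n} (R_edges n)" unfolding simple_graph_def by simp
  moreover have "card (R_edges n) = n - 1"
  proof -
    have "inj_on (\<lambda>i. {0, i}) {1..n - 2}" by (auto simp: inj_on_def doubleton_eq_iff)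
    moreover have "{1, n - 1} \<notin> (\<lambda>i. {0, i}) ` {1..n - 2}" using assms by (auto simp: doubleton_eq_iff)
    ultimately show ?thesis unfolding R_edges_eq using assms by (simp add: card_image)
  qed
  moreover have "graph_connected {0..<n} (R_edges n)"
  proof (rule graph_connected_if_root)
    fix v assume "v \<in> {0..<n}"
    have "adj (R_edges n) 0 i" if "i \<in> {1..n - 2}" for i
      using that unfolding adj_def R_edges_eq by blast
    moreover have "adj (R_edges n) 1 (n - 1)" unfolding adj_def R_edges_eq by blast
    moreover have "v = 0 \<or> v \<in> {1..n - 2} \<or> v = n - 1" using \<open>v \<in> {0..<n}\<close> by auto
    moreover have "1 \<in> {1..n - 2}" using assms by simp
    ultimately show "(adj (R_edges n))\<^sup>*\<^sup>* 0 v"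
      by (metis r_into_rtranclp rtranclp.rtrancl_refl rtranclp.rtrancl_into_rtrancl)
  qed
  ultimately show ?thesis unfolding is_tree_def using assms by auto
qed

lemma nis1_R_edgesI:
  assumes "S \<subseteq> {0..<n}" "e \<in> R_edges n" "e \<subseteq> S"
    and "\<And>i. i \<in> {1..n - 2} \<Longrightarrow> {0, i} \<subseteq> S \<Longrightarrow> {0, i} = e"
    and "{1, n - 1} \<subseteq> S \<Longrightarrow> {1, n - 1} = e"
  shows "S \<in> nis1 {0..<n} (R_edges n)"
  using assms(1-3)
proof (rule nis1I)
  fix e' assume "e' \<in> R_edges n" "e' \<subseteq> S"
  then show "e' = e"
  proof (cases rule: R_edgesE)
    case 1
    then show ?thesis using assms(5) \<open>e' \<subseteq> S\<close> by simp
  next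
    case (2 i)
    then show ?thesis using assms(4) \<open>e' \<subseteq> S\<close> by simp
  qed
qed

lemma nis1_R_edges_root_free:
  assumes "4 \<le> n" "S \<in> nis1 {0..<n} (R_edges n)" "0 \<notin> S"
  shows "S \<in> (\<lambda>A. {1, n - 1} \<union> A) ` Pow {2..n - 2}"
proof -
  obtain e where S: "S \<subseteq> {0..<n}" "e \<in> R_edges n" "e \<subseteq> S"
    using nis1E[OF assms(2)] by metis
  from \<open>e \<in> R_edges n\<close> have "{1, n - 1} \<subseteq> S"
    by (cases rule: R_edgesE) (use S(3) assms(3) in auto)
  moreover have "S - {1, n - 1} \<subseteq> {2..n - 2}"
  proof
    fix x assume "x \<in> S - {1, n - 1}"
    then have "x \<in> S" "x \<noteq> 1" "x \<noteq> n - 1" by auto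
    moreover have "x < n" using S(1) \<open>x \<in> S\<close> by auto
    moreover have "x \<noteq> 0" using assms(3) \<open>x \<in> S\<close> by metis
    ultimately show "x \<in> {2..n - 2}" by simp
  qed
  ultimately show ?thesis by (intro image_eqI[of _ _ "S - {1, n - 1}"]) auto
qed

lemma nis1_R_edges_rooted:
  assumes "4 \<le> n" "S \<in> nis1 {0..<n} (R_edges n)" "0 \<in> S"
  shows "S = {0, 1} \<or> (\<exists>i\<in>{2..n - 2}. S = {0, i} \<or> S = {0, i, n - 1})"
proof -
  obtain e where S: "S \<subseteq> {0..<n}" "e \<in> R_edges n" "e \<subseteq> S"
    and unique: "\<And>e'. e' \<in> R_edges n \<Longrightarrow> e' \<subseteq> S \<Longrightarrow> e' = e"
    using nis1E[OF assms(2)] by metis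
  have centre: "{0, j} = e" if "j \<in> S" "j \<in> {1..n - 2}" for j
    using unique[of "{0, j}"] assms(3) that unfolding R_edges_eq by blast
  obtain i where i: "i \<in> {1..n - 2}" "e = {0, i}"
    using \<open>e \<in> R_edges n\<close>
  proof (cases rule: R_edgesE)
    case 1
    then have "{0, 1} = {1, n - 1}" using centre[of 1] S(3) assms(1) by auto
    then show ?thesis using assms(1) by (auto simp: doubleton_eq_iff)
  qed
  have "S \<subseteq> {0, i, n - 1}"
  proof
    fix x assume "x \<in> S"
    then have "x = 0 \<or> x \<in> {1..n - 2} \<or> x = n - 1" using S(1) by fastforce
    then show "x \<in> {0, i, n - 1}" using centre[of x] \<open>x \<in> S\<close> i by (auto simp: doubleton_eq_iff)
  qed
  show ?thesis
  proof (cases "i = 1")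
    case True
    have "n - 1 \<notin> S"
      using unique[of "{1, n - 1}"] S(3) i True assms(1) unfolding R_edges_eq by (auto simp: doubleton_eq_iff)
    then show ?thesis using \<open>S \<subseteq> {0, i, n - 1}\<close> S(3) i True by auto
  next
    case False
    then have "i \<in> {2..n - 2}" using i(1) by auto
    moreover have "S = {0, i} \<or> S = {0, i, n - 1}"
    proof (cases "n - 1 \<in> S")
      case True
      then have "S = {0, i, n - 1}" using \<open>S \<subseteq> {0, i, n - 1}\<close> S(3) i(2) by auto
      then show ?thesis ..
    next
      case False
      then have "S = {0, i}" using \<open>S \<subseteq> {0, i, n - 1}\<close> S(3) i(2) by auto
      then show ?thesis ..
    qed
    ultimately show ?thesis by blast
  qed
qed

lemma nis1_R_edges:
  assumes "4 \<le> n"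
  shows "nis1 {0..<n} (R_edges n) =
    (\<lambda>i. {0, i}) ` {2..n - 2} \<union> (\<lambda>i. {0, i, n - 1}) ` {2..n - 2} \<union> {{0, 1}}
      \<union> (\<lambda>A. {1, n - 1} \<union> A) ` Pow {2..n - 2}"
    (is "_ = ?F")
proof (intro equalityI subsetI)
  fix S assume "S \<in> nis1 {0..<n} (R_edges n)"
  show "S \<in> ?F"
  proof (cases "0 \<in> S")
    case True
    then have "S = {0, 1} \<or> (\<exists>i\<in>{2..n - 2}. S = {0, i} \<or> S = {0, i, n - 1})"
      using nis1_R_edges_rooted[OF assms \<open>S \<in> nis1 {0..<n} (R_edges n)\<close>] by simp
    then show ?thesis by blast
  next
    case False
    then show ?thesis using nis1_R_edges_root_free[OF assms \<open>S \<in> nis1 {0..<n} (R_edges n)\<close>] by blast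
  qed
next
  have edge_in: "{0, i} \<in> R_edges n" if "i \<in> {1..n - 2}" for i
    using that unfolding R_edges_eq by blast
  fix S assume "S \<in> ?F"
  then consider (leaf) i where "i \<in> {2..n - 2}" "S = {0, i}"
    | (leaf_tail) i where "i \<in> {2..n - 2}" "S = {0, i, n - 1}"
    | (root_one) "S = {0, 1}"
    | (tail) A where "A \<subseteq> {2..n - 2}" "S = {1, n - 1} \<union> A"
    by blast
  then show "S \<in> nis1 {0..<n} (R_edges n)"
  proof cases
    case (leaf i)
    then show ?thesis using assms
      by (intro nis1_R_edgesI[of _ _ "{0, i}"] edge_in) (auto simp: doubleton_eq_iff)
  next
    case (leaf_tail i)
    then show ?thesis using assms
      by (intro nis1_R_edgesI[of _ _ "{0, i}"] edge_in) (auto simp: doubleton_eq_iff)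
  next
    case root_one
    then show ?thesis using assms
      by (intro nis1_R_edgesI[of _ _ "{0, 1}"] edge_in) (auto simp: doubleton_eq_iff)
  next
    case (tail A)
    have "{2..n - 2} \<subseteq> {0..<n}" "0 \<notin> {2..n - 2}" by auto
    then have "A \<subseteq> {0..<n}" "0 \<notin> A" using tail(1) by blast+
    then show ?thesis using tail assms
      by (intro nis1_R_edgesI[of _ _ "{1, n - 1}"]) (auto simp: R_edges_eq)
  qed
qed

lemma inj_on_Un_Pow:
  assumes "C \<inter> L = {}"
  shows "inj_on (\<lambda>A. C \<union> A) (Pow L)"
proof (rule inj_onI)
  fix A B assume "A \<in> Pow L" "B \<in> Pow L" "C \<union> A = C \<union> B"
  then have "(C \<union> A) - C = (C \<union> B) - C" by simp
  then show "A = B" using \<open>A \<in> Pow L\<close> \<open>B \<in> Pow L\<close> assms by blast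
qed

lemma sum_nis1_R_edges:
  assumes "4 \<le> n"
  shows "(\<Sum>S\<in>nis1 {0..<n} (R_edges n). f S) =
    (\<Sum>i\<in>{2..n - 2}. f {0, i}) + (\<Sum>i\<in>{2..n - 2}. f {0, i, n - 1}) + f {0, 1}
      + (\<Sum>A\<in>Pow {2..n - 2}. f ({1, n - 1} \<union> A))"
proof -
  define L where "L = {2..n - 2}"
  define F1 F2 F3 F4 where "F1 = (\<lambda>i. {0, i}) ` L" and "F2 = (\<lambda>i. {0, i, n - 1}) ` L"
    and "F3 = {{0, 1::nat}}" and "F4 = (\<lambda>A. {1, n - 1} \<union> A) ` Pow L"
  have L: "finite L" "0 \<notin> L" "1 \<notin> L" "n - 1 \<notin> L" unfolding L_def by auto
  have "n - 1 \<noteq> 0" "n - 1 \<noteq> 1" using assms by auto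
  have "inj_on (\<lambda>i. {0, i}) L" by (auto simp: inj_on_def doubleton_eq_iff)
  then have sum1: "sum f F1 = (\<Sum>i\<in>L. f {0, i})"
    unfolding F1_def by (rule sum.reindex_cong) simp_all
  have "inj_on (\<lambda>i. {0, i, n - 1}) L"
  proof (rule inj_onI)
    fix i j assume "i \<in> L" "j \<in> L" "{0, i, n - 1} = {0, j, n - 1}"
    then have "i \<in> {0, j, n - 1}" by blast
    then show "i = j" using \<open>i \<in> L\<close> L by auto
  qed
  then have sum2: "sum f F2 = (\<Sum>i\<in>L. f {0, i, n - 1})"
    unfolding F2_def by (rule sum.reindex_cong) simp_all
  have "inj_on (\<lambda>A. {1, n - 1} \<union> A) (Pow L)" by (rule inj_on_Un_Pow) (use L in blast)
  then have sum4: "sum f F4 = (\<Sum>A\<in>Pow L. f ({1, n - 1} \<union> A))"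
    unfolding F4_def by (rule sum.reindex_cong) simp_all
  have "n - 1 \<in> Y" if "Y \<in> F2" for Y using that unfolding F2_def by auto
  moreover have "n - 1 \<notin> X" if "X \<in> F1" for X using that L \<open>n - 1 \<noteq> 0\<close> unfolding F1_def by auto
  ultimately have "F1 \<inter> F2 = {}" by (meson disjoint_iff)
  have "1 \<notin> X" if "X \<in> F1 \<union> F2" for X
    using that L \<open>n - 1 \<noteq> 1\<close> unfolding F1_def F2_def by auto
  then have "{0, 1} \<notin> F1 \<union> F2" by blast
  then have "(F1 \<union> F2) \<inter> F3 = {}" unfolding F3_def by simp
  have "0 \<in> X" if "X \<in> F1 \<union> F2 \<union> F3" for X using that unfolding F1_def F2_def F3_def by auto
  moreover have "0 \<notin> Y" if "Y \<in> F4" for Y using that L \<open>n - 1 \<noteq> 0\<close> unfolding F4_def by auto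
  ultimately have "(F1 \<union> F2 \<union> F3) \<inter> F4 = {}" by (meson disjoint_iff)
  moreover have "finite F1" "finite F2" "finite F3" "finite F4"
    unfolding F1_def F2_def F3_def F4_def using L by simp_all
  ultimately have "sum f (F1 \<union> F2 \<union> F3 \<union> F4) = sum f F1 + sum f F2 + sum f F3 + sum f F4"
    using \<open>F1 \<inter> F2 = {}\<close> \<open>(F1 \<union> F2) \<inter> F3 = {}\<close> by (simp add: sum.union_disjoint)
  also have "\<dots> = (\<Sum>i\<in>L. f {0, i}) + (\<Sum>i\<in>L. f {0, i, n - 1}) + f {0, 1}
      + (\<Sum>A\<in>Pow L. f ({1, n - 1} \<union> A))"
    unfolding sum1 sum2 sum4 F3_def by simp
  finally show ?thesis
    unfolding nis1_R_edges[OF assms] F1_def F2_def F3_def F4_def L_def .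
qed

lemma sum_card_Pow:
  assumes "finite L"
  shows "2 * (\<Sum>A\<in>Pow L. card A) = card L * 2 ^ card L"
proof -
  have "bij_betw (\<lambda>A. L - A) (Pow L) (Pow L)"
    by (rule bij_betw_byWitness[where f' = "\<lambda>A. L - A"]) auto
  then have "(\<Sum>A\<in>Pow L. card (L - A)) = (\<Sum>A\<in>Pow L. card A)"
    by (rule sum.reindex_bij_betw)
  then have "2 * (\<Sum>A\<in>Pow L. card A) = (\<Sum>A\<in>Pow L. card A + card (L - A))"
    by (simp add: sum.distrib)
  also have "\<dots> = (\<Sum>A\<in>Pow L. card L)"
    using assms by (intro sum.cong) (auto simp: card_Diff_subset card_mono finite_subset)
  finally show ?thesis using assms by (simp add: card_Pow)
qed

lemma sigma1_R_edges:
  assumes "4 \<le> n"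
  shows "sigma1 {0..<n} (R_edges n) = 2 * (n - 3) + 1 + 2 ^ (n - 3)"
  unfolding sigma1_def card_eq_sum sum_nis1_R_edges[OF assms] by (simp add: card_Pow)

lemma S1_R_edges:
  assumes "4 \<le> n"
  shows "2 * S1 {0..<n} (R_edges n) = 10 * (n - 3) + 4 + (n + 1) * 2 ^ (n - 3)"
proof -
  define L where "L = {2..n - 2}"
  have L: "finite L" "card L = n - 3" "0 \<notin> L" "1 \<notin> L" "n - 1 \<notin> L"
    unfolding L_def using assms by auto
  have "i \<noteq> 0 \<and> i \<noteq> n - 1" if "i \<in> L" for i using that L by metis
  then have "(\<Sum>i\<in>L. card {0, i}) = (\<Sum>i\<in>L. 2)" "(\<Sum>i\<in>L. card {0, i, n - 1}) = (\<Sum>i\<in>L. 3)"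
    using assms by (auto intro: sum.cong)
  moreover have "(\<Sum>A\<in>Pow L. card ({1, n - 1} \<union> A)) = (\<Sum>A\<in>Pow L. 2 + card A)"
  proof (rule sum.cong)
    fix A assume "A \<in> Pow L"
    then have "finite A" "{1, n - 1} \<inter> A = {}" using L finite_subset by auto
    then show "card ({1, n - 1} \<union> A) = 2 + card A" using assms by (simp add: card_Un_disjoint)
  qed simp
  moreover have "2 * (\<Sum>A\<in>Pow L. 2 + card A) = 4 * 2 ^ (n - 3) + (n - 3) * 2 ^ (n - 3)"
    unfolding sum.distrib using sum_card_Pow[OF L(1)] L by (simp add: card_Pow)
  ultimately show ?thesis
    using assms L(2) unfolding S1_def sum_nis1_R_edges[OF assms] L_def[symmetric]
    by (simp add: algebra_simps) linarith
qed

lemma av1_R_edges: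
  assumes "1 \<le> k"
  shows "av1 {0..<k + 3} (R_edges (k + 3)) - (real (k + 3) + 1) / 2
    = (real k - 2 * real k ^ 2) / (2 * (2 * real k + 1 + 2 ^ k))"
proof -
  have "4 \<le> k + 3" using assms by simp
  have sigma: "real (sigma1 {0..<k + 3} (R_edges (k + 3))) = 2 * real k + 1 + 2 ^ k"
    using sigma1_R_edges[OF \<open>4 \<le> k + 3\<close>] by simp
  have "real (2 * S1 {0..<k + 3} (R_edges (k + 3))) = real (10 * k + 4 + (k + 4) * 2 ^ k)"
    using S1_R_edges[OF \<open>4 \<le> k + 3\<close>] by (simp add: add.commute)
  then have S1: "2 * real (S1 {0..<k + 3} (R_edges (k + 3))) = 10 * real k + 4 + (real k + 4) * 2 ^ k"
    by simp
  have "2 * real k + 1 + 2 ^ k > (0::real)" by (simp add: add_pos_pos)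
  then show ?thesis
    unfolding av1_def sigma using S1 by (simp add: field_simps power2_eq_square)
qed

lemma two_power_ge_cube: "10 \<le> k \<Longrightarrow> k ^ 3 \<le> (2::nat) ^ k"
proof (induction k rule: nat_induct_at_least)
  case base
  then show ?case by simp
next
  case (Suc k)
  have "10 * k \<le> k * k" "10 * (k * k) \<le> k * (k * k)" using Suc(1) by (intro mult_le_mono1; simp)+
  have "Suc k ^ 3 = k * (k * k) + 3 * (k * k) + 3 * k + 1" by (simp add: power3_eq_cube algebra_simps)
  also have "\<dots> \<le> 2 * (k * (k * k))"
    using \<open>10 * k \<le> k * k\<close> \<open>10 * (k * k) \<le> k * (k * k)\<close> Suc(1) by linarith
  also have "\<dots> \<le> 2 * 2 ^ k" using Suc(2) by (simp add: power3_eq_cube)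
  finally show ?case by simp
qed

lemma two_power_gt_square: "6 \<le> k \<Longrightarrow> 2 * k ^ 2 < (2::nat) ^ k + 3 * k + 1"
proof (induction k rule: nat_induct_at_least)
  case base
  then show ?case by simp
next
  case (Suc k)
  have "6 * k \<le> k * k" using Suc(1) by (intro mult_le_mono1)
  have "2 * Suc k ^ 2 = 2 * (k * k) + 4 * k + 2" by (simp add: power2_eq_square algebra_simps)
  also have "\<dots> < 2 * 2 ^ k + 3 * k + 4"
    using Suc(2) \<open>6 * k \<le> k * k\<close> unfolding power2_eq_square by linarith
  finally show ?case by simp
qed

lemma R_edges_gap_tendsto_zero:
  "(\<lambda>k. (real k - 2 * real k ^ 2) / (2 * (2 * real k + 1 + 2 ^ k))) \<longlonglongrightarrow> 0"
proof (rule tendsto_sandwich[of "\<lambda>k. - 1 / real k" _ _ "\<lambda>_. 0"])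
  have bounds: "- 1 / real k \<le> (real k - 2 * real k ^ 2) / (2 * (2 * real k + 1 + 2 ^ k))
      \<and> (real k - 2 * real k ^ 2) / (2 * (2 * real k + 1 + 2 ^ k)) \<le> 0" if "10 \<le> k" for k
  proof -
    have "real (k ^ 3) \<le> real ((2::nat) ^ k)" using two_power_ge_cube[OF that] by (simp only: of_nat_le_iff)
    then have cube: "real k ^ 3 \<le> 2 ^ k" by simp
    have "- (2 * (2 * real k + 1 + 2 ^ k)) \<le> - 2 * 2 ^ k" by simp
    also have "\<dots> \<le> - 2 * real k ^ 3" using cube by simp
    also have "\<dots> \<le> real k ^ 2 - 2 * real k ^ 3" by simp
    also have "\<dots> = real k * (real k - 2 * real k ^ 2)" by (simp add: power2_eq_square power3_eq_cube algebra_simps)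
    finally have key: "- (2 * (2 * real k + 1 + 2 ^ k)) \<le> real k * (real k - 2 * real k ^ 2)" .
    have "real k > 0" using that by simp
    have D: "2 * (2 * real k + 1 + 2 ^ k) > 0" by (simp add: add_pos_pos)
    have "- 1 / real k * (2 * (2 * real k + 1 + 2 ^ k)) = - (2 * (2 * real k + 1 + 2 ^ k)) / real k"
      using \<open>real k > 0\<close> by (simp add: field_simps)
    also have "\<dots> \<le> real k - 2 * real k ^ 2"
      using key \<open>real k > 0\<close> by (simp add: pos_divide_le_eq mult.commute)
    finally have "- 1 / real k \<le> (real k - 2 * real k ^ 2) / (2 * (2 * real k + 1 + 2 ^ k))"
      using D by (simp add: pos_le_divide_eq)
    moreover have "real k - 2 * real k ^ 2 \<le> 0"
      using \<open>real k > 0\<close> that by (simp add: power2_eq_square)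
    ultimately show ?thesis using D by (simp add: divide_nonpos_pos)
  qed
  show "\<forall>\<^sub>F k in sequentially. - 1 / real k \<le> (real k - 2 * real k ^ 2) / (2 * (2 * real k + 1 + 2 ^ k))"
    using eventually_ge_at_top[of 10] by eventually_elim (use bounds in blast)
  show "\<forall>\<^sub>F k in sequentially. (real k - 2 * real k ^ 2) / (2 * (2 * real k + 1 + 2 ^ k)) \<le> 0"
    using eventually_ge_at_top[of 10] by eventually_elim (use bounds in blast)
  show "(\<lambda>k. - 1 / real k) \<longlonglongrightarrow> 0" by (rule lim_const_over_n)
qed simp

lemma av1_R_edges_gt_half:
  assumes "8 < n"
  shows "real n / 2 < av1 {0..<n} (R_edges n)"
proof -
  define k where "k = n - 3"
  have n: "n = k + 3" "6 \<le> k" using assms unfolding k_def by auto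
  have "real (2 * k ^ 2) < real (2 ^ k + 3 * k + 1)"
    using two_power_gt_square[OF n(2)] by (simp only: of_nat_less_iff)
  then have "- (2 * real k + 1 + 2 ^ k) < real k - 2 * real k ^ 2" by simp
  then have "- 1 / 2 * (2 * (2 * real k + 1 + 2 ^ k)) < real k - 2 * real k ^ 2"
    by (subst mult.assoc[symmetric]) simp
  moreover have "0 < 2 * (2 * real k + 1 + 2 ^ k)" by (simp add: add_pos_pos)
  ultimately have "- 1 / 2 < (real k - 2 * real k ^ 2) / (2 * (2 * real k + 1 + 2 ^ k))"
    by (simp only: pos_less_divide_eq)
  then show ?thesis using av1_R_edges[of k] n by (simp add: field_simps)
qed

lemma av1_R_edges_deviation_tendsto_zero:
  "(\<lambda>n. av1 {0..<n} (R_edges n) - (real n + 1) / 2) \<longlonglongrightarrow> 0"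
proof (rule LIMSEQ_offset[where k = 4])
  have "av1 {0..<m + 4} (R_edges (m + 4)) - (real (m + 4) + 1) / 2
      = (real (m + 1) - 2 * real (m + 1) ^ 2) / (2 * (2 * real (m + 1) + 1 + 2 ^ (m + 1)))" for m
    using av1_R_edges[of "m + 1"] by (simp add: numeral_eq_Suc)
  moreover have "(\<lambda>m. (real (m + 1) - 2 * real (m + 1) ^ 2) / (2 * (2 * real (m + 1) + 1 + 2 ^ (m + 1))))
      \<longlonglongrightarrow> 0"
    by (rule LIMSEQ_ignore_initial_segment[OF R_edges_gap_tendsto_zero])
  ultimately show "(\<lambda>m. av1 {0..<m + 4} (R_edges (m + 4)) - (real (m + 4) + 1) / 2) \<longlonglongrightarrow> 0"
    by simp
qed

section \<open>The maximum M_n\<close>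

lemma finite_trees: "finite {E. is_tree {0..<n::nat} E}"
proof (rule finite_subset)
  show "{E. is_tree {0..<n} E} \<subseteq> Pow (Pow {0..<n})"
    unfolding is_tree_def simple_graph_def by auto
qed simp

lemma av1_R_edges_le_M:
  assumes "4 \<le> n"
  shows "av1 {0..<n} (R_edges n) \<le> M n"
  unfolding M_def using finite_trees is_tree_R_edges[OF assms] by (intro Max_ge) auto

lemma M_less:
  assumes "4 \<le> n"
  shows "M n < (real n + 1) / 2"
proof -
  have "av1 {0..<n} E < (real n + 1) / 2" if "is_tree {0..<n} E" for E
    using av1_less_connected[of "{0..<n}" E] that assms unfolding is_tree_def by simp
  then show ?thesis
    unfolding M_def using finite_trees is_tree_R_edges[OF assms] by (subst Max_less_iff) auto
qed

theorem mainTheorem13: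
  shows "(\<forall>n::nat. n > 8 \<longrightarrow>
            (\<exists>\<delta>::real. M n = real n / 2 + \<delta> \<and> 0 < \<delta> \<and> \<delta> < 1/2))
       \<and> (\<lambda>n. M n - (real n + 1) / 2) \<longlonglongrightarrow> 0
       \<and> (\<forall>n::nat. n > 8 \<longrightarrow>
            is_tree {0..<n} (R_edges n)
            \<and> real n / 2 < av1 {0..<n} (R_edges n)
            \<and> av1 {0..<n} (R_edges n) < (real n + 1) / 2)
       \<and> (\<lambda>n. av1 {0..<n} (R_edges n) - (real n + 1) / 2) \<longlonglongrightarrow> 0"
proof (intro conjI allI impI)
  fix n :: nat assume "n > 8"
  then have "4 \<le> n" by simp
  have "real n / 2 < M n" using av1_R_edges_gt_half[OF \<open>n > 8\<close>] av1_R_edges_le_M[OF \<open>4 \<le> n\<close>] by simp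
  then show "\<exists>\<delta>::real. M n = real n / 2 + \<delta> \<and> 0 < \<delta> \<and> \<delta> < 1/2"
    using M_less[OF \<open>4 \<le> n\<close>] by (intro exI[of _ "M n - real n / 2"]) (simp add: field_simps)
  show "is_tree {0..<n} (R_edges n)" by (rule is_tree_R_edges[OF \<open>4 \<le> n\<close>])
  show "real n / 2 < av1 {0..<n} (R_edges n)" by (rule av1_R_edges_gt_half[OF \<open>n > 8\<close>])
  show "av1 {0..<n} (R_edges n) < (real n + 1) / 2"
    using av1_R_edges_le_M[OF \<open>4 \<le> n\<close>] M_less[OF \<open>4 \<le> n\<close>] by simp
next
  show "(\<lambda>n. M n - (real n + 1) / 2) \<longlonglongrightarrow> 0"
  proof (rule tendsto_sandwich[OF _ _ av1_R_edges_deviation_tendsto_zero tendsto_const])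
    show "\<forall>\<^sub>F n in sequentially. av1 {0..<n} (R_edges n) - (real n + 1) / 2 \<le> M n - (real n + 1) / 2"
      using eventually_ge_at_top[of 4] by eventually_elim (simp add: av1_R_edges_le_M)
    show "\<forall>\<^sub>F n in sequentially. M n - (real n + 1) / 2 \<le> 0"
      using eventually_ge_at_top[of 4] by eventually_elim (use M_less in fastforce)
  qed
qed (rule av1_R_edges_deviation_tendsto_zero)

end
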